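(* Let $(M,\rho)$ be a metric space and $f:[a,b]\to M$ continuous. Assume that (i) there is a closed, at most countable set $E\subset[a,b]$ such that $f$ is absolutely continuous on each closed interval contained in $[a,b]\setminus E$, and (ii) $md(f,x)$ exists for almost every $x\in[a,b]$ and $\int_a^b md(f,x)\,dx<\infty$. Then $f$ is absolutely continuous on $[a,b]$.
   Context: $md(f,x)=\lim_{t\to0,\ x+t\in[a,b]}\rho(f(x+t),f(x))/|t|$ when it exists. Absolute continuity of $f$ on an interval $I$: for every $\varepsilon>0$ there is $\delta>0$ such that for non-overlapping intervals $[a_i,b_i]\subset I$ with $\sum_i(b_i-a_i)<\delta$ one has $\sum_i\rho(f(b_i),f(a_i))<\varepsilon$. *)

theory Defs
  imports "HOL-Analysis.Analysis"
begin

definition md_exists :: "(real \<Rightarrow> 'a::metric_space) \<Rightarrow> real \<Rightarrow> real \<Rightarrow> real \<Rightarrow> bool" where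
  "md_exists f a b x \<longleftrightarrow>
     (\<exists>L. ((\<lambda>t. dist (f (x + t)) (f x) / \<bar>t\<bar>) \<longlongrightarrow> L) (at 0 within {t. x + t \<in> {a..b}}))"

definition md :: "(real \<Rightarrow> 'a::metric_space) \<Rightarrow> real \<Rightarrow> real \<Rightarrow> real \<Rightarrow> real" where
  "md f a b x = (if md_exists f a b x
      then Lim (at 0 within {t. x + t \<in> {a..b}}) (\<lambda>t. dist (f (x + t)) (f x) / \<bar>t\<bar>)
      else 0)"

text \<open>Absolute continuity on the closed interval [c,d]; a finite family of
  non-overlapping intervals [u,v] is a finite set of pairs (u,v).\<close>
definition abs_cont_on :: "(real \<Rightarrow> 'a::metric_space) \<Rightarrow> real \<Rightarrow> real \<Rightarrow> bool" where
  "abs_cont_on f c d \<longleftrightarrow>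
     (\<forall>\<epsilon>>0. \<exists>\<delta>>0. \<forall>S :: (real \<times> real) set.
        finite S \<and> (\<forall>(u, v) \<in> S. c \<le> u \<and> u \<le> v \<and> v \<le> d) \<and>
        (\<forall>(u, v) \<in> S. \<forall>(u', v') \<in> S. (u, v) \<noteq> (u', v') \<longrightarrow> v \<le> u' \<or> v' \<le> u) \<and>
        (\<Sum>(u, v) \<in> S. v - u) < \<delta>
        \<longrightarrow> (\<Sum>(u, v) \<in> S. dist (f v) (f u)) < \<epsilon>)"

end

theory Submission
  imports Defs
begin

text \<open>
  For \<open>a \<le> u \<le> v \<le> b\<close> we show \<open>dist (f v) (f u) \<le> \<integral>\<^sub>u\<^sup>v md f\<close>; absolute continuity of f then
  follows from the absolute continuity of the integral. The inequality is proved with a gauge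
  on \<open>[u,v]\<close>, treating three kinds of tags separately. Where md f exists, f is locally Lipschitz
  with constant \<open>md f + e\<close>, so these tags contribute at most a Riemann sum of md f. At the
  countably many tags in E, continuity of f lets the n-th point of E contribute at most \<open>e/2\<^sup>n\<close>.
  The remaining tags form a null set outside E. Each of them is interior, relative to \<open>[a,b]\<close>,
  to one of countably many rational intervals J inside \<open>[a,b] - E\<close>; covering the null set by an
  open set that is small for the absolute continuity of f on the n-th such J bounds the tags
  attached to it by \<open>e/2\<^sup>n\<close> as well.
\<close>

section \<open>Non-overlapping families of intervals\<close>

definition nonoverlapping_intervals :: "real \<Rightarrow> real \<Rightarrow> (real \<times> real) set \<Rightarrow> bool" where
  "nonoverlapping_intervals c d S \<longleftrightarrow> finite S \<and> (\<forall>(u, v) \<in> S. c \<le> u \<and> u \<le> v \<and> v \<le> d) \<and>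
     (\<forall>(u, v) \<in> S. \<forall>(u', v') \<in> S. (u, v) \<noteq> (u', v') \<longrightarrow> v \<le> u' \<or> v' \<le> u)"

lemma abs_cont_on_iff:
  "abs_cont_on f c d \<longleftrightarrow> (\<forall>\<epsilon>>0. \<exists>\<delta>>0. \<forall>S. nonoverlapping_intervals c d S \<and> (\<Sum>(u, v)\<in>S. v - u) < \<delta>
      \<longrightarrow> (\<Sum>(u, v)\<in>S. dist (f v) (f u)) < \<epsilon>)"
  unfolding abs_cont_on_def nonoverlapping_intervals_def by meson

lemma nonoverlapping_intervals_negligible_overlap:
  assumes "nonoverlapping_intervals c d S"
  shows "pairwise (\<lambda>i j. negligible ({fst i..snd i} \<inter> {fst j..snd j})) S"
proof (rule pairwiseI)
  fix i j assume "i \<in> S" "j \<in> S" "i \<noteq> j"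
  then have "snd i \<le> fst j \<or> snd j \<le> fst i"
    using assms unfolding nonoverlapping_intervals_def by (cases i, cases j) fastforce
  then have "{fst i..snd i} \<inter> {fst j..snd j} \<subseteq> {fst i, snd i}"
    by auto
  then show "negligible ({fst i..snd i} \<inter> {fst j..snd j})"
    by (rule negligible_subset[rotated]) auto
qed

lemma sum_integral_nonoverlapping_le:
  fixes g :: "real \<Rightarrow> real"
  assumes S: "nonoverlapping_intervals c d S"
    and g: "g integrable_on {c..d}" "\<And>x. x \<in> {c..d} \<Longrightarrow> 0 \<le> g x"
  shows "(\<Sum>(u, v)\<in>S. integral {u..v} g) \<le> integral {c..d} g"
proof -
  have fin: "finite S" and sub: "\<And>i. i \<in> S \<Longrightarrow> {fst i..snd i} \<subseteq> {c..d}"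
    using S unfolding nonoverlapping_intervals_def by auto
  have int: "(g has_integral (\<Sum>i\<in>S. integral {fst i..snd i} g)) (\<Union>i\<in>S. {fst i..snd i})"
    using fin integrable_on_subinterval[OF g(1) sub]
      nonoverlapping_intervals_negligible_overlap[OF S]
    by (intro has_integral_UN) auto
  then have "(\<Sum>i\<in>S. integral {fst i..snd i} g) = integral (\<Union>i\<in>S. {fst i..snd i}) g"
    by (rule integral_unique[symmetric])
  also have "\<dots> \<le> integral {c..d} g"
    using int g UN_least[of S _ "{c..d}", OF sub] by (intro integral_subset_le) auto
  finally have "(\<Sum>i\<in>S. integral {fst i..snd i} g) \<le> integral {c..d} g" .
  then show ?thesis
    by (simp add: split_beta)
qed

lemma sum_length_nonoverlapping_le_measure:
  assumes S: "nonoverlapping_intervals c d S"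
    and U: "\<And>u v. (u, v) \<in> S \<Longrightarrow> {u..v} \<subseteq> U" "U \<in> lmeasurable"
  shows "(\<Sum>(u, v)\<in>S. v - u) \<le> measure lebesgue U"
proof -
  have fin: "finite S" and le: "\<And>i. i \<in> S \<Longrightarrow> fst i \<le> snd i"
    using S unfolding nonoverlapping_intervals_def by auto
  have "(\<Sum>(u, v)\<in>S. v - u) = (\<Sum>i\<in>S. measure lebesgue {fst i..snd i})"
    using le by (intro sum.cong) auto
  also have "\<dots> = measure lebesgue (\<Union>i\<in>S. {fst i..snd i})"
    using nonoverlapping_intervals_negligible_overlap[OF S]
    by (intro measure_negligible_finite_Union_image[symmetric] fin) auto
  also have "\<dots> \<le> measure lebesgue U"
  proof (rule measure_mono_fmeasurable[OF _ _ U(2)])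
    show "(\<Union>i\<in>S. {fst i..snd i}) \<subseteq> U"
      by (rule UN_least) (metis U(1) prod.collapse)
    show "(\<Union>i\<in>S. {fst i..snd i}) \<in> sets lebesgue"
      using fin by (intro sets.finite_UN fmeasurableD) auto
  qed
  finally show ?thesis .
qed

lemma integrable_on_min_const:
  fixes h :: "real \<Rightarrow> real"
  assumes "h integrable_on {a..b}" "\<And>x. x \<in> {a..b} \<Longrightarrow> 0 \<le> h x"
  shows "(\<lambda>x. min (h x) c) integrable_on {a..b}"
proof -
  have "h absolutely_integrable_on {a..b}"
    using assms by (rule nonnegative_absolutely_integrable_1)
  then have "(\<lambda>x. min (h x) c) absolutely_integrable_on {a..b}"
    by (rule absolutely_integrable_min_1) simp
  then show ?thesis
    by (rule set_lebesgue_integral_eq_integral(1))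
qed

lemma integral_min_const_tendsto:
  fixes h :: "real \<Rightarrow> real"
  assumes h: "h integrable_on {a..b}" "\<And>x. x \<in> {a..b} \<Longrightarrow> 0 \<le> h x"
  shows "(\<lambda>k. integral {a..b} (\<lambda>x. min (h x) (real k))) \<longlonglongrightarrow> integral {a..b} h"
proof (rule dominated_convergence(2)[OF integrable_on_min_const[OF h] h(1)])
  show "norm (min (h x) (real k)) \<le> h x" if "x \<in> {a..b}" for k x
    using h(2)[OF that] by auto
  show "(\<lambda>k. min (h x) (real k)) \<longlonglongrightarrow> h x" for x
  proof (rule tendsto_eventually)
    obtain N :: nat where "h x \<le> real N"
      using real_arch_simple by blast
    then show "\<forall>\<^sub>F k in sequentially. min (h x) (real k) = h x"
      unfolding eventually_sequentially by (intro exI[of _ N]) auto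
  qed
qed

lemma sum_integral_nonoverlapping_le_truncation:
  fixes h :: "real \<Rightarrow> real"
  assumes h: "h integrable_on {a..b}" "\<And>x. x \<in> {a..b} \<Longrightarrow> 0 \<le> h x"
    and S: "nonoverlapping_intervals a b S"
  shows "(\<Sum>(u, v)\<in>S. integral {u..v} h)
    \<le> c * (\<Sum>(u, v)\<in>S. v - u) + (integral {a..b} h - integral {a..b} (\<lambda>x. min (h x) c))"
proof -
  define r where "r x = h x - min (h x) c" for x
  have min_int: "(\<lambda>x. min (h x) c) integrable_on {a..b}"
    using h by (rule integrable_on_min_const)
  have r_int: "r integrable_on {a..b}"
    unfolding r_def by (rule integrable_diff[OF h(1) min_int])
  have sub: "{u..v} \<subseteq> {a..b}" and uv: "u \<le> v" if "(u, v) \<in> S" for u v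
    using S that unfolding nonoverlapping_intervals_def by auto
  have "integral {u..v} h \<le> c * (v - u) + integral {u..v} r" if "(u, v) \<in> S" for u v
  proof -
    have "integral {u..v} (\<lambda>x. min (h x) c) \<le> integral {u..v} (\<lambda>x. c)"
      using integrable_on_subinterval[OF min_int sub[OF that]] by (intro integral_le) auto
    moreover have "integral {u..v} r = integral {u..v} h - integral {u..v} (\<lambda>x. min (h x) c)"
      unfolding r_def using sub[OF that]
      by (intro integral_diff integrable_on_subinterval[OF h(1)] integrable_on_subinterval[OF min_int])
    ultimately show ?thesis
      using uv[OF that] by (simp add: mult.commute)
  qed
  then have "(\<Sum>(u, v)\<in>S. integral {u..v} h) \<le> (\<Sum>(u, v)\<in>S. c * (v - u) + integral {u..v} r)"
    by (intro sum_mono) auto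
  also have "\<dots> = c * (\<Sum>(u, v)\<in>S. v - u) + (\<Sum>(u, v)\<in>S. integral {u..v} r)"
    by (simp add: sum.distrib sum_distrib_left split_beta)
  also have "(\<Sum>(u, v)\<in>S. integral {u..v} r) \<le> integral {a..b} r"
    using S r_int by (rule sum_integral_nonoverlapping_le) (simp add: r_def)
  also have "integral {a..b} r = integral {a..b} h - integral {a..b} (\<lambda>x. min (h x) c)"
    unfolding r_def by (rule integral_diff[OF h(1) min_int])
  finally show ?thesis
    by simp
qed

text \<open>Absolute continuity of the integral: truncate the integrand at a level k for which
  little of the integral is lost.\<close>
lemma sum_integral_nonoverlapping_small:
  fixes h :: "real \<Rightarrow> real"
  assumes h: "h integrable_on {a..b}" "\<And>x. x \<in> {a..b} \<Longrightarrow> 0 \<le> h x" and "\<epsilon> > 0"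
  obtains \<delta> where "\<delta> > 0"
    "\<And>S. nonoverlapping_intervals a b S \<Longrightarrow> (\<Sum>(u, v)\<in>S. v - u) < \<delta> \<Longrightarrow>
       (\<Sum>(u, v)\<in>S. integral {u..v} h) < \<epsilon>"
proof -
  have "\<forall>\<^sub>F k in sequentially. integral {a..b} h - \<epsilon> / 2 < integral {a..b} (\<lambda>x. min (h x) (real k))"
    using integral_min_const_tendsto[OF h] \<open>\<epsilon> > 0\<close> by (intro order_tendstoD(1)) auto
  then obtain k :: nat where k: "integral {a..b} h - \<epsilon> / 2 < integral {a..b} (\<lambda>x. min (h x) (real k))"
    by (meson eventually_sequentially order.refl)
  show ?thesis
  proof
    show "\<epsilon> / (2 * (real k + 1)) > 0"
      using \<open>\<epsilon> > 0\<close> by simp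
    fix S assume S: "nonoverlapping_intervals a b S" and len: "(\<Sum>(u, v)\<in>S. v - u) < \<epsilon> / (2 * (real k + 1))"
    have "real k * (\<Sum>(u, v)\<in>S. v - u) \<le> real k * (\<epsilon> / (2 * (real k + 1)))"
      using len by (intro mult_left_mono) auto
    also have "\<dots> < \<epsilon> / 2"
      using \<open>\<epsilon> > 0\<close> by (simp add: field_simps)
    finally show "(\<Sum>(u, v)\<in>S. integral {u..v} h) < \<epsilon>"
      using sum_integral_nonoverlapping_le_truncation[OF h S, of "real k"] k by linarith
  qed
qed

lemma abs_cont_on_if_dist_le_integral:
  fixes f :: "real \<Rightarrow> 'a::metric_space" and h :: "real \<Rightarrow> real"
  assumes h: "h integrable_on {a..b}" "\<And>x. x \<in> {a..b} \<Longrightarrow> 0 \<le> h x"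
    and dist_le: "\<And>u v. a \<le> u \<Longrightarrow> u \<le> v \<Longrightarrow> v \<le> b \<Longrightarrow> dist (f v) (f u) \<le> integral {u..v} h"
  shows "abs_cont_on f a b"
  unfolding abs_cont_on_iff
proof (intro allI impI)
  fix \<epsilon> :: real assume "\<epsilon> > 0"
  then obtain \<delta> where "\<delta> > 0" and \<delta>: "\<And>S. nonoverlapping_intervals a b S \<Longrightarrow>
      (\<Sum>(u, v)\<in>S. v - u) < \<delta> \<Longrightarrow> (\<Sum>(u, v)\<in>S. integral {u..v} h) < \<epsilon>"
    using sum_integral_nonoverlapping_small[OF h] by blast
  have "(\<Sum>(u, v)\<in>S. dist (f v) (f u)) < \<epsilon>"
    if S: "nonoverlapping_intervals a b S" "(\<Sum>(u, v)\<in>S. v - u) < \<delta>" for S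
  proof -
    have "(\<Sum>(u, v)\<in>S. dist (f v) (f u)) \<le> (\<Sum>(u, v)\<in>S. integral {u..v} h)"
      using S(1) dist_le unfolding nonoverlapping_intervals_def by (intro sum_mono) auto
    also have "\<dots> < \<epsilon>"
      using \<delta>[OF S] .
    finally show ?thesis .
  qed
  with \<open>\<delta> > 0\<close> show "\<exists>\<delta>>0. \<forall>S. nonoverlapping_intervals a b S \<and> (\<Sum>(u, v)\<in>S. v - u) < \<delta> \<longrightarrow>
      (\<Sum>(u, v)\<in>S. dist (f v) (f u)) < \<epsilon>"
    by blast
qed

section \<open>The metric derivative\<close>

lemma md_filter_nontrivial:
  fixes a b x :: real
  assumes "a < b" "x \<in> {a..b}"
  shows "at 0 within {t. x + t \<in> {a..b}} \<noteq> bot"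
proof -
  have "{t. x + t \<in> {a..b}} = {a - x..b - x}"
    by auto
  then show ?thesis
    using assms by (simp add: trivial_limit_within)
qed

lemma md_tendsto:
  fixes f :: "real \<Rightarrow> 'a::metric_space"
  assumes "a < b" "x \<in> {a..b}" "md_exists f a b x"
  shows "((\<lambda>t. dist (f (x + t)) (f x) / \<bar>t\<bar>) \<longlongrightarrow> md f a b x) (at 0 within {t. x + t \<in> {a..b}})"
proof -
  obtain L where L: "((\<lambda>t. dist (f (x + t)) (f x) / \<bar>t\<bar>) \<longlongrightarrow> L) (at 0 within {t. x + t \<in> {a..b}})"
    using assms(3) unfolding md_exists_def by blast
  then have "md f a b x = L"
    using assms(3) tendsto_Lim[OF md_filter_nontrivial[OF assms(1,2)]] by (simp add: md_def)
  with L show ?thesis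
    by simp
qed

lemma md_nonneg:
  fixes f :: "real \<Rightarrow> 'a::metric_space"
  assumes "a < b" "x \<in> {a..b}"
  shows "0 \<le> md f a b x"
proof (cases "md_exists f a b x")
  case True
  show ?thesis
    by (rule tendsto_lowerbound[OF md_tendsto[OF assms True] _ md_filter_nontrivial[OF assms]])
      (simp add: always_eventually)
qed (simp add: md_def)

lemma dist_le_md_interval:
  fixes f :: "real \<Rightarrow> 'a::metric_space"
  assumes "a < b" "x \<in> {a..b}" "md_exists f a b x" "e > 0"
  obtains r where "r > 0"
    "\<And>u v. u \<le> x \<Longrightarrow> x \<le> v \<Longrightarrow> {u..v} \<subseteq> {a..b} \<inter> ball x r \<Longrightarrow>
       dist (f v) (f u) \<le> (md f a b x + e) * (v - u)"
proof -
  have "\<forall>\<^sub>F t in at 0 within {t. x + t \<in> {a..b}}. dist (f (x + t)) (f x) / \<bar>t\<bar> < md f a b x + e"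
    using order_tendstoD(2)[OF md_tendsto[OF assms(1-3)]] assms(4) by simp
  then obtain r where "r > 0" and r: "\<And>t. x + t \<in> {a..b} \<Longrightarrow> t \<noteq> 0 \<Longrightarrow> \<bar>t\<bar> < r \<Longrightarrow>
      dist (f (x + t)) (f x) / \<bar>t\<bar> < md f a b x + e"
    unfolding eventually_at by (auto simp: dist_real_def)
  have near: "dist (f y) (f x) \<le> (md f a b x + e) * \<bar>y - x\<bar>" if "y \<in> {a..b} \<inter> ball x r" for y
  proof (cases "y = x")
    case False
    then have "dist (f (x + (y - x))) (f x) / \<bar>y - x\<bar> < md f a b x + e"
      using that by (intro r) (auto simp: dist_real_def)
    with False show ?thesis
      by (simp add: divide_less_eq mult.commute less_imp_le)
  qed simp
  show ?thesis
  proof (rule that[OF \<open>r > 0\<close>])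
    fix u v assume uv: "u \<le> x" "x \<le> v" "{u..v} \<subseteq> {a..b} \<inter> ball x r"
    have "dist (f v) (f u) \<le> dist (f v) (f x) + dist (f u) (f x)"
      by (rule dist_triangle2)
    also have "\<dots> \<le> (md f a b x + e) * \<bar>v - x\<bar> + (md f a b x + e) * \<bar>u - x\<bar>"
      using uv by (intro add_mono near) (auto simp: subset_eq)
    also have "\<dots> = (md f a b x + e) * (v - u)"
      using uv(1,2) by (simp add: algebra_simps)
    finally show "dist (f v) (f u) \<le> (md f a b x + e) * (v - u)" .
  qed
qed

text \<open>The clamping \<open>y \<mapsto> max a (min b y)\<close> does not change these quotients eventually, but makes
  them continuous functions of x on the whole line.\<close>
lemma md_forward_quotients_tendsto:
  fixes f :: "real \<Rightarrow> 'a::metric_space"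
  assumes "a < b" "x \<in> {a..<b}" "md_exists f a b x"
  shows "(\<lambda>n. real (Suc n) * dist (f (max a (min b (x + 1 / real (Suc n))))) (f (max a (min b x))))
    \<longlonglongrightarrow> md f a b x"
proof -
  define t where "t n = 1 / real (Suc n)" for n
  have "t \<longlonglongrightarrow> 0"
    unfolding t_def by (rule LIMSEQ_Suc[OF lim_const_over_n])
  moreover have "\<forall>\<^sub>F n in sequentially. t n < b - x"
    using order_tendstoD(2)[OF \<open>t \<longlonglongrightarrow> 0\<close>] assms(2) by simp
  then have ev: "\<forall>\<^sub>F n in sequentially. x + t n \<in> {a..b} \<and> t n \<noteq> 0"
  proof eventually_elim
    case (elim n)
    have "t n > 0"
      by (simp add: t_def)
    with elim show ?case
      using assms(2) by auto
  qed
  ultimately have "filterlim t (at 0 within {t. x + t \<in> {a..b}}) sequentially"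
    by (simp add: filterlim_at)
  from filterlim_compose[OF md_tendsto[OF assms(1) _ assms(3)] this] assms(2)
  have "(\<lambda>n. dist (f (x + t n)) (f x) / \<bar>t n\<bar>) \<longlonglongrightarrow> md f a b x"
    by simp
  moreover have "\<forall>\<^sub>F n in sequentially. dist (f (x + t n)) (f x) / \<bar>t n\<bar>
      = real (Suc n) * dist (f (max a (min b (x + t n)))) (f (max a (min b x)))"
    using ev
  proof eventually_elim
    case (elim n)
    then have "max a (min b (x + t n)) = x + t n" "max a (min b x) = x"
      using assms(2) by auto
    then show ?case
      by (simp add: t_def)
  qed
  ultimately show ?thesis
    unfolding t_def by (rule Lim_transform_eventually)
qed

text \<open>Measurability: on \<open>[a,b)\<close> the metric derivative is a.e. the pointwise limit of continuous
  difference quotients.\<close>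
lemma md_borel_measurable:
  fixes f :: "real \<Rightarrow> 'a::metric_space"
  assumes ab: "a < b" and cont: "continuous_on {a..b} f"
    and ae: "AE x in lebesgue. x \<in> {a..b} \<longrightarrow> md_exists f a b x"
  shows "(\<lambda>x. indicator {a..b} x * md f a b x) \<in> borel_measurable lebesgue"
proof -
  define q where "q n x = real (Suc n) * dist (f (max a (min b (x + 1 / real (Suc n))))) (f (max a (min b x)))"
    for n x
  have clamped_cont: "continuous_on UNIV (\<lambda>x. f (max a (min b x)))"
    by (rule continuous_on_compose2[OF cont]) (use ab in \<open>auto intro!: continuous_intros\<close>)
  have "q n \<in> borel_measurable borel" for n
    unfolding q_def
    by (intro borel_measurable_continuous_onI continuous_intros continuous_on_compose2[OF clamped_cont]) auto
  then have "(\<lambda>x. indicator {a..<b} x * lim (\<lambda>n. q n x)) \<in> borel_measurable lebesgue"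
    by (intro borel_measurable_times borel_measurable_indicator borel_measurable_lim_metric
        measurable_completion) auto
  moreover have "AE x in lebesgue. x \<notin> {b}"
    by (rule AE_not_in) (auto intro: null_sets_completion countable_imp_null_set_lborel)
  with ae have "AE x in lebesgue. indicator {a..<b} x * lim (\<lambda>n. q n x) = indicator {a..b} x * md f a b x"
  proof eventually_elim
    case (elim x)
    show ?case
    proof (cases "x \<in> {a..<b}")
      case True
      with elim have "(\<lambda>n. q n x) \<longlonglongrightarrow> md f a b x"
        unfolding q_def by (intro md_forward_quotients_tendsto[OF ab]) auto
      with True show ?thesis
        by (simp add: limI)
    qed (use elim in \<open>auto simp: indicator_def\<close>)
  qed
  ultimately show ?thesis
    by (rule borel_measurable_AE)
qed

lemma md_set_integrable:
  fixes f :: "real \<Rightarrow> 'a::metric_space"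
  assumes ab: "a < b" and cont: "continuous_on {a..b} f"
    and ae: "AE x in lebesgue. x \<in> {a..b} \<longrightarrow> md_exists f a b x"
    and fin: "(\<integral>\<^sup>+ x \<in> {a..b}. ennreal (md f a b x) \<partial>lebesgue) < \<infinity>"
  shows "set_integrable lebesgue {a..b} (md f a b)"
proof -
  have "AE x in lebesgue. 0 \<le> indicator {a..b} x * md f a b x"
    using md_nonneg[OF ab] by (intro AE_I2) (auto simp: indicator_def)
  moreover have "(\<integral>\<^sup>+ x. ennreal (indicator {a..b} x * md f a b x) \<partial>lebesgue) < \<infinity>"
    using fin by (simp add: indicator_mult_ennreal mult.commute)
  ultimately show ?thesis
    unfolding set_integrable_def using md_borel_measurable[OF ab cont ae] by (simp add: integrableI_nonneg)
qed

section \<open>Tagged divisions of an interval\<close>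

lemma tagged_division_ofD_Icc:
  fixes D :: "(real \<times> real set) set"
  assumes "D tagged_division_of {p..q}" "(x, K) \<in> D"
  shows "K = {Inf K..Sup K}" "Inf K \<le> x" "x \<le> Sup K" "Inf K \<in> K" "Sup K \<in> K"
    "measure lborel K = Sup K - Inf K"
proof -
  obtain u v where "K = cbox u v"
    using tagged_division_ofD(4)[OF assms] by blast
  moreover have "x \<in> K"
    using tagged_division_ofD(2)[OF assms] .
  ultimately show "K = {Inf K..Sup K}" "Inf K \<le> x" "x \<le> Sup K" "Inf K \<in> K" "Sup K \<in> K"
    "measure lborel K = Sup K - Inf K"
    by (auto simp: box_real(2))
qed

lemma tagged_division_interior:
  fixes D :: "(real \<times> real set) set"
  assumes "D tagged_division_of {p..q}" "(x, K) \<in> D"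
  shows "interior K = {Inf K<..<Sup K}"
  using interior_atLeastAtMost_real[of "Inf K" "Sup K"]
  by (simp only: tagged_division_ofD_Icc(1)[OF assms, symmetric])

lemma tagged_division_nonoverlap:
  fixes D :: "(real \<times> real set) set"
  assumes D: "D tagged_division_of {p..q}" and in_D: "(x, K) \<in> D" "(x', K') \<in> D"
    and "(x, K) \<noteq> (x', K')" and nondeg: "Inf K < Sup K" "Inf K' < Sup K'"
  shows "Sup K \<le> Inf K' \<or> Sup K' \<le> Inf K"
proof (rule ccontr)
  assume "\<not> (Sup K \<le> Inf K' \<or> Sup K' \<le> Inf K)"
  then have "max (Inf K) (Inf K') < min (Sup K) (Sup K')"
    using nondeg by (auto simp: max_def min_def)
  then have "(max (Inf K) (Inf K') + min (Sup K) (Sup K')) / 2 \<in> interior K \<inter> interior K'"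
    unfolding tagged_division_interior[OF D in_D(1)] tagged_division_interior[OF D in_D(2)] by auto
  moreover have "interior K \<inter> interior K' = {}"
    using tagged_division_ofD(5)[OF D in_D] assms(4) by blast
  ultimately show False
    by blast
qed

lemma tagged_division_tag_side_inj:
  fixes D :: "(real \<times> real set) set"
  assumes D: "D tagged_division_of {p..q}"
  shows "inj_on (\<lambda>(x, K). (x, x < Sup K)) {(x, K) \<in> D. Inf K < Sup K}"
proof (rule inj_onI, clarsimp, rule ccontr)
  fix x K K' assume in_D: "(x, K) \<in> D" "(x, K') \<in> D" and nondeg: "Inf K < Sup K" "Inf K' < Sup K'"
    and side: "(x < Sup K) = (x < Sup K')" and "K \<noteq> K'"
  have "Sup K \<le> Inf K' \<or> Sup K' \<le> Inf K"
    using tagged_division_nonoverlap[OF D in_D _ nondeg] \<open>K \<noteq> K'\<close> by blast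
  then show False
    using side nondeg tagged_division_ofD_Icc(2,3)[OF D in_D(1)] tagged_division_ofD_Icc(2,3)[OF D in_D(2)]
    by (auto; linarith)
qed

lemma sum_power_half_inj_le:
  assumes "finite A" "inj_on n A"
  shows "(\<Sum>x\<in>A. (1/2::real) ^ n x) \<le> 2"
proof -
  have "(\<Sum>x\<in>A. (1/2::real) ^ n x) = (\<Sum>k\<in>n ` A. (1/2) ^ k)"
    by (simp add: sum.reindex[OF assms(2)] comp_def)
  also have "\<dots> \<le> (\<Sum>k. (1/2) ^ k)"
    using assms(1) by (intro sum_le_suminf summable_geometric) auto
  also have "\<dots> = 2"
    using suminf_geometric[of "1/2::real"] by simp
  finally show ?thesis .
qed

text \<open>At most two nondegenerate intervals carry the same tag, one on either side of it.\<close>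
lemma sum_tagged_division_by_tags_le:
  fixes D :: "(real \<times> real set) set" and c :: "real \<Rightarrow> real set \<Rightarrow> real"
  assumes D: "D tagged_division_of {p..q}" and "G \<subseteq> D"
    and c: "\<And>x K. (x, K) \<in> G \<Longrightarrow> 0 \<le> c x K" "\<And>x K. (x, K) \<in> G \<Longrightarrow> Inf K = Sup K \<Longrightarrow> c x K = 0"
      "\<And>x K. (x, K) \<in> G \<Longrightarrow> c x K \<le> B x"
  shows "(\<Sum>(x, K)\<in>G. c x K) \<le> 2 * (\<Sum>x\<in>fst ` G. B x)"
proof -
  define G' where "G' = {(x, K) \<in> G. Inf K < Sup K}"
  have fin: "finite G"
    using \<open>G \<subseteq> D\<close> tagged_division_ofD(1)[OF D] by (rule finite_subset)
  have "Inf K \<le> Sup K" if "(x, K) \<in> G" for x K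
    using tagged_division_ofD_Icc(2,3)[OF D, of x K] that \<open>G \<subseteq> D\<close> by auto
  then have "(\<Sum>(x, K)\<in>G. c x K) = (\<Sum>(x, K)\<in>G'. c x K)"
    using fin c(2) by (intro sum.mono_neutral_right) (force simp: G'_def)+
  also have "\<dots> \<le> (\<Sum>(x, K)\<in>G'. B x)"
    using c(3) by (intro sum_mono) (auto simp: G'_def)
  also have "\<dots> = (\<Sum>(x, s)\<in>(\<lambda>(x, K). (x, x < Sup K)) ` G'. B x)"
  proof -
    have "inj_on (\<lambda>(x, K). (x, x < Sup K)) G'"
      by (rule inj_on_subset[OF tagged_division_tag_side_inj[OF D]]) (use \<open>G \<subseteq> D\<close> in \<open>auto simp: G'_def\<close>)
    then show ?thesis
      by (subst sum.reindex) (simp_all add: split_beta comp_def)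
  qed
  also have "\<dots> \<le> (\<Sum>(x, s)\<in>fst ` G \<times> (UNIV :: bool set). B x)"
  proof (rule sum_mono2)
    show "finite (fst ` G \<times> (UNIV :: bool set))"
      using fin by simp
    show "(\<lambda>(x, K). (x, x < Sup K)) ` G' \<subseteq> fst ` G \<times> UNIV"
      by (force simp: G'_def)
    show "0 \<le> (case z of (x, s) \<Rightarrow> B x)" if "z \<in> fst ` G \<times> UNIV - (\<lambda>(x, K). (x, x < Sup K)) ` G'" for z
      using that c(1,3) by (force intro: order.trans)
  qed
  also have "\<dots> = 2 * (\<Sum>x\<in>fst ` G. B x)"
    by (simp add: sum.cartesian_product[symmetric] UNIV_bool sum_distrib_left)
  finally show ?thesis .
qed

lemma tagged_subdivision_intervals:
  fixes D :: "(real \<times> real set) set" and g :: "real \<Rightarrow> real \<Rightarrow> real"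
  assumes D: "D tagged_division_of {p..q}" and "G \<subseteq> D" and G: "\<Union>(snd ` G) \<subseteq> {c..d}"
    and g: "\<And>u. g u u = 0"
  obtains S where "nonoverlapping_intervals c d S"
    "\<And>u v. (u, v) \<in> S \<Longrightarrow> \<exists>x. (x, {u..v}) \<in> G"
    "(\<Sum>(x, K)\<in>G. g (Inf K) (Sup K)) = (\<Sum>(u, v)\<in>S. g u v)"
proof -
  define G' where "G' = {(x, K) \<in> G. Inf K < Sup K}"
  define S where "S = (\<lambda>(x, K). (Inf K, Sup K)) ` G'"
  have fin: "finite G"
    using \<open>G \<subseteq> D\<close> tagged_division_ofD(1)[OF D] by (rule finite_subset)
  have Icc: "K = {Inf K..Sup K}" "Inf K \<le> Sup K" if "(x, K) \<in> G" for x K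
    using tagged_division_ofD_Icc[OF D, of x K] that \<open>G \<subseteq> D\<close> by auto
  have nonoverlap: "Sup K \<le> Inf K' \<or> Sup K' \<le> Inf K"
    if "(x, K) \<in> G'" "(x', K') \<in> G'" "(x, K) \<noteq> (x', K')" for x K x' K'
    using that \<open>G \<subseteq> D\<close> by (intro tagged_division_nonoverlap[OF D]) (auto simp: G'_def)
  have inj: "inj_on (\<lambda>(x, K). (Inf K, Sup K)) G'"
    by (rule inj_onI) (use nonoverlap in \<open>fastforce simp: G'_def\<close>)
  show ?thesis
  proof
    show "nonoverlapping_intervals c d S"
      unfolding nonoverlapping_intervals_def S_def
    proof (intro conjI)
      have "finite G'"
        unfolding G'_def using fin by (rule rev_finite_subset) auto
      then show "finite ((\<lambda>(x, K). (Inf K, Sup K)) ` G')"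
        by simp
      show "\<forall>(u, v)\<in>(\<lambda>(x, K). (Inf K, Sup K)) ` G'. c \<le> u \<and> u \<le> v \<and> v \<le> d"
        using G Icc by (fastforce simp: G'_def)
      show "\<forall>(u, v)\<in>(\<lambda>(x, K). (Inf K, Sup K)) ` G'. \<forall>(u', v')\<in>(\<lambda>(x, K). (Inf K, Sup K)) ` G'.
          (u, v) \<noteq> (u', v') \<longrightarrow> v \<le> u' \<or> v' \<le> u"
        using nonoverlap by fastforce
    qed
    show "\<exists>x. (x, {u..v}) \<in> G" if "(u, v) \<in> S" for u v
      using that Icc by (fastforce simp: S_def G'_def)
    have "(\<Sum>(x, K)\<in>G. g (Inf K) (Sup K)) = (\<Sum>(x, K)\<in>G'. g (Inf K) (Sup K))"
      using fin Icc g by (intro sum.mono_neutral_right) (force simp: G'_def)+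
    also have "\<dots> = (\<Sum>(u, v)\<in>S. g u v)"
      unfolding S_def by (subst sum.reindex[OF inj]) (simp add: split_beta)
    finally show "(\<Sum>(x, K)\<in>G. g (Inf K) (Sup K)) = (\<Sum>(u, v)\<in>S. g u v)" .
  qed
qed

section \<open>Gauges controlling the variation of f\<close>

lemma null_set_open_cover:
  assumes "N \<in> null_sets lebesgue" "\<delta> > 0"
  obtains U where "open U" "N \<subseteq> U" "U \<in> lmeasurable" "measure lebesgue U < \<delta>"
proof -
  obtain U where "open U" "N \<subseteq> U" and U_N: "U - N \<in> lmeasurable" "emeasure lebesgue (U - N) < \<delta>"
    using sets_lebesgue_outer_open[OF null_setsD2[OF assms(1)] assms(2)] by blast
  moreover have "U \<in> lmeasurable"
    using assms(1) U_N(1) \<open>open U\<close>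
    by (metis borel_open measurable_Diff_null_set sets_completionI_sets sets_lborel)
  moreover have "measure lebesgue U = measure lebesgue (U - N)"
    using assms(1) \<open>U \<in> lmeasurable\<close> by (simp add: fmeasurableD measure_Diff_null_set)
  ultimately show ?thesis
    using that U_N(1) by (simp add: emeasure_eq_measure2 ennreal_less_iff)
qed

lemma abs_cont_on_open_cover:
  fixes f :: "real \<Rightarrow> 'a::metric_space"
  assumes "abs_cont_on f c d" "N \<in> null_sets lebesgue" "\<epsilon> > 0"
  obtains U where "open U" "N \<subseteq> U"
    "\<And>S. nonoverlapping_intervals c d S \<Longrightarrow> \<forall>(u, v)\<in>S. {u..v} \<subseteq> U \<Longrightarrow>
       (\<Sum>(u, v)\<in>S. dist (f v) (f u)) < \<epsilon>"
proof -
  obtain \<delta> where "\<delta> > 0" and \<delta>: "\<And>S. nonoverlapping_intervals c d S \<Longrightarrow> (\<Sum>(u, v)\<in>S. v - u) < \<delta> \<Longrightarrow>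
      (\<Sum>(u, v)\<in>S. dist (f v) (f u)) < \<epsilon>"
    using assms(1,3) unfolding abs_cont_on_iff by blast
  obtain U where U: "open U" "N \<subseteq> U" "U \<in> lmeasurable" "measure lebesgue U < \<delta>"
    using null_set_open_cover[OF assms(2) \<open>\<delta> > 0\<close>] .
  show ?thesis
  proof (rule that[OF U(1,2)])
    fix S assume S: "nonoverlapping_intervals c d S" "\<forall>(u, v)\<in>S. {u..v} \<subseteq> U"
    have "(\<Sum>(u, v)\<in>S. v - u) < \<delta>"
      using sum_length_nonoverlapping_le_measure[OF S(1) _ U(3)] S(2) U(4) by fastforce
    with S(1) show "(\<Sum>(u, v)\<in>S. dist (f v) (f u)) < \<epsilon>"
      by (rule \<delta>)
  qed
qed

lemma countable_Icc_cover_complement: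
  fixes E :: "real set"
  assumes "closed E"
  obtains \<J> :: "(real \<times> real) set" where "countable \<J>"
    "\<And>c d. (c, d) \<in> \<J> \<Longrightarrow> c \<le> d \<and> {c..d} \<subseteq> {a..b} - E"
    "\<And>x. x \<in> {a..b} - E \<Longrightarrow> \<exists>(c, d)\<in>\<J>. \<exists>r>0. ball x r \<inter> {a..b} \<subseteq> {c..d}"
proof
  define \<J> where "\<J> = {(max a c, min b d) | c d. c \<in> \<rat> \<and> d \<in> \<rat> \<and>
      max a c \<le> min b d \<and> {max a c..min b d} \<subseteq> {a..b} - E}"
  have "\<J> \<subseteq> (\<lambda>(c, d). (max a c, min b d)) ` (\<rat> \<times> \<rat>)"
    unfolding \<J>_def by auto
  then show "countable \<J>"
    by (rule countable_subset) (intro countable_image countable_SIGMA countable_rat)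
  show "c \<le> d \<and> {c..d} \<subseteq> {a..b} - E" if "(c, d) \<in> \<J>" for c d
    using that unfolding \<J>_def by auto
  fix x assume x: "x \<in> {a..b} - E"
  obtain r where "r > 0" and r: "ball x r \<subseteq> - E"
    using x open_contains_ball[of "- E"] assms by auto
  obtain c where c: "c \<in> \<rat>" "x - r < c" "c < x - r / 2"
    using Rats_dense_in_real[of "x - r" "x - r / 2"] \<open>r > 0\<close> by auto
  obtain d where d: "d \<in> \<rat>" "x + r / 2 < d" "d < x + r"
    using Rats_dense_in_real[of "x + r / 2" "x + r"] \<open>r > 0\<close> by auto
  have "{max a c..min b d} \<subseteq> ball x r"
    using c d by (auto simp: dist_real_def)
  with r have "{max a c..min b d} \<subseteq> {a..b} - E"
    by auto
  moreover have "max a c \<le> min b d"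
    using x c d \<open>r > 0\<close> by auto
  ultimately have "(max a c, min b d) \<in> \<J>"
    unfolding \<J>_def using c(1) d(1) by blast
  moreover have "ball x (r / 2) \<inter> {a..b} \<subseteq> {max a c..min b d}"
  proof
    fix y assume "y \<in> ball x (r / 2) \<inter> {a..b}"
    then have "\<bar>x - y\<bar> < r / 2" "a \<le> y" "y \<le> b"
      by (auto simp: dist_real_def)
    then have "-(r / 2) < x - y" "x - y < r / 2" "a \<le> y" "y \<le> b"
      unfolding abs_less_iff by auto
    with c d show "y \<in> {max a c..min b d}"
      by simp
  qed
  ultimately show "\<exists>(c, d)\<in>\<J>. \<exists>r>0. ball x r \<inter> {a..b} \<subseteq> {c..d}"
    using \<open>r > 0\<close> by (intro bexI[of _ "(max a c, min b d)"]) (auto intro!: exI[of _ "r / 2"])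
qed

lemma gauge_countable_tags:
  fixes f :: "real \<Rightarrow> 'a::metric_space"
  assumes cont: "continuous_on {a..b} f" and "countable E" and "e > 0"
  obtains \<gamma> where "gauge \<gamma>"
    "\<And>D p q. D tagged_division_of {p..q} \<Longrightarrow> {p..q} \<subseteq> {a..b} \<Longrightarrow> \<gamma> fine D \<Longrightarrow>
       (\<Sum>(x, K)\<in>{(x, K)\<in>D. x \<in> E}. dist (f (Sup K)) (f (Inf K))) \<le> 4 * e"
proof -
  define n where "n = to_nat_on E"
  have "\<forall>x. \<exists>r>0. x \<in> {a..b} \<longrightarrow>
      (\<forall>y\<in>{a..b}. dist y x < r \<longrightarrow> dist (f y) (f x) < e / 2 * (1/2) ^ n x)"
  proof
    fix x
    have "e / 2 * (1/2) ^ n x > 0"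
      using \<open>e > 0\<close> by simp
    then show "\<exists>r>0. x \<in> {a..b} \<longrightarrow> (\<forall>y\<in>{a..b}. dist y x < r \<longrightarrow> dist (f y) (f x) < e / 2 * (1/2) ^ n x)"
      using cont unfolding continuous_on_iff by (metis zero_less_one)
  qed
  then obtain r where r_pos: "\<And>x. r x > 0" and
    r: "\<And>x y. x \<in> {a..b} \<Longrightarrow> y \<in> {a..b} \<Longrightarrow> dist y x < r x \<Longrightarrow> dist (f y) (f x) < e / 2 * (1/2) ^ n x"
    by metis
  show ?thesis
  proof (rule that)
    show "gauge (\<lambda>x. ball x (r x))"
      using r_pos by (intro gauge_ball_dependent) auto
    fix D p q assume D: "D tagged_division_of {p..q}" and "{p..q} \<subseteq> {a..b}"
      and fine: "(\<lambda>x. ball x (r x)) fine D"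
    define G where "G = {(x, K)\<in>D. x \<in> E}"
    have "dist (f (Sup K)) (f (Inf K)) \<le> e * (1/2) ^ n x" if "(x, K) \<in> D" for x K
    proof -
      have "x \<in> {a..b}" "K \<subseteq> {a..b} \<inter> ball x (r x)"
        using tagged_division_ofD(2,3)[OF D that] fineD[OF fine that] \<open>{p..q} \<subseteq> {a..b}\<close> by auto
      then have "dist (f (Sup K)) (f x) < e / 2 * (1/2) ^ n x" "dist (f (Inf K)) (f x) < e / 2 * (1/2) ^ n x"
        using tagged_division_ofD_Icc(4,5)[OF D that] by (intro r; force simp: dist_commute)+
      then show ?thesis
        using dist_triangle2[of "f (Sup K)" "f (Inf K)" "f x"] by simp
    qed
    then have "(\<Sum>(x, K)\<in>G. dist (f (Sup K)) (f (Inf K))) \<le> 2 * (\<Sum>x\<in>fst ` G. e * (1/2) ^ n x)"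
      by (intro sum_tagged_division_by_tags_le[OF D]) (auto simp: G_def)
    also have "\<dots> = 2 * e * (\<Sum>x\<in>fst ` G. (1/2) ^ n x)"
      by (simp add: sum_distrib_left mult.assoc)
    also have "\<dots> \<le> 2 * e * 2"
    proof -
      have "finite G"
        unfolding G_def using tagged_division_ofD(1)[OF D] by (rule rev_finite_subset) auto
      moreover have "inj_on n (fst ` G)"
        unfolding n_def using inj_on_to_nat_on[OF \<open>countable E\<close>] by (rule inj_on_subset) (auto simp: G_def)
      ultimately show ?thesis
        using \<open>e > 0\<close> by (intro mult_left_mono sum_power_half_inj_le) auto
    qed
    finally show "(\<Sum>(x, K)\<in>{(x, K)\<in>D. x \<in> E}. dist (f (Sup K)) (f (Inf K))) \<le> 4 * e"
      by (simp add: G_def)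
  qed
qed

lemma gauge_md_tags:
  fixes f :: "real \<Rightarrow> 'a::metric_space"
  assumes "a < b" "e > 0"
  obtains \<gamma> where "gauge \<gamma>"
    "\<And>D p q. p \<le> q \<Longrightarrow> D tagged_division_of {p..q} \<Longrightarrow> {p..q} \<subseteq> {a..b} \<Longrightarrow> \<gamma> fine D \<Longrightarrow>
       (\<Sum>(x, K)\<in>{(x, K)\<in>D. md_exists f a b x}. dist (f (Sup K)) (f (Inf K)))
         \<le> (\<Sum>(x, K)\<in>D. measure lborel K * md f a b x) + e * (q - p)"
proof -
  have "\<forall>x. \<exists>r>0. x \<in> {a..b} \<and> md_exists f a b x \<longrightarrow> (\<forall>u v. u \<le> x \<longrightarrow> x \<le> v \<longrightarrow>
      {u..v} \<subseteq> {a..b} \<inter> ball x r \<longrightarrow> dist (f v) (f u) \<le> (md f a b x + e) * (v - u))"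
    using dist_le_md_interval[OF assms(1) _ _ assms(2)] by (metis zero_less_one)
  then obtain r where r_pos: "\<And>x. r x > 0" and
    r: "\<And>x u v. x \<in> {a..b} \<Longrightarrow> md_exists f a b x \<Longrightarrow> u \<le> x \<Longrightarrow> x \<le> v \<Longrightarrow>
      {u..v} \<subseteq> {a..b} \<inter> ball x (r x) \<Longrightarrow> dist (f v) (f u) \<le> (md f a b x + e) * (v - u)"
    by metis
  show ?thesis
  proof (rule that)
    show "gauge (\<lambda>x. ball x (r x))"
      using r_pos by (intro gauge_ball_dependent) auto
    fix D p q assume "p \<le> q" and D: "D tagged_division_of {p..q}" and "{p..q} \<subseteq> {a..b}"
      and fine: "(\<lambda>x. ball x (r x)) fine D"
    have tag: "x \<in> {a..b}" "K \<subseteq> {a..b} \<inter> ball x (r x)" if "(x, K) \<in> D" for x K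
      using tagged_division_ofD(2,3)[OF D that] fineD[OF fine that] \<open>{p..q} \<subseteq> {a..b}\<close> by auto
    have "(\<Sum>(x, K)\<in>{(x, K)\<in>D. md_exists f a b x}. dist (f (Sup K)) (f (Inf K)))
        \<le> (\<Sum>(x, K)\<in>{(x, K)\<in>D. md_exists f a b x}. measure lborel K * md f a b x + e * measure lborel K)"
    proof (rule sum_mono, clarify)
      fix x K assume xK: "(x, K) \<in> D" and "md_exists f a b x"
      note K = tagged_division_ofD_Icc[OF D xK]
      have "dist (f (Sup K)) (f (Inf K)) \<le> (md f a b x + e) * (Sup K - Inf K)"
        using tag[OF xK] K(1-3) by (intro r \<open>md_exists f a b x\<close>) auto
      then show "dist (f (Sup K)) (f (Inf K)) \<le> measure lborel K * md f a b x + e * measure lborel K"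
        by (simp add: K(6) algebra_simps)
    qed
    also have "\<dots> \<le> (\<Sum>(x, K)\<in>D. measure lborel K * md f a b x + e * measure lborel K)"
    proof (rule sum_mono2[OF tagged_division_ofD(1)[OF D]])
      show "0 \<le> (case z of (x, K) \<Rightarrow> measure lborel K * md f a b x + e * measure lborel K)"
        if "z \<in> D - {(x, K)\<in>D. md_exists f a b x}" for z
        using that md_nonneg[OF assms(1) tag(1)] \<open>e > 0\<close> by (auto intro!: add_nonneg_nonneg mult_nonneg_nonneg)
    qed auto
    also have "\<dots> = (\<Sum>(x, K)\<in>D. measure lborel K * md f a b x) + e * (q - p)"
      using additive_content_tagged_division[of D p q] D \<open>p \<le> q\<close>
      by (simp add: sum.distrib split_beta flip: sum_distrib_left)
    finally show "(\<Sum>(x, K)\<in>{(x, K)\<in>D. md_exists f a b x}. dist (f (Sup K)) (f (Inf K)))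
        \<le> (\<Sum>(x, K)\<in>D. measure lborel K * md f a b x) + e * (q - p)" .
  qed
qed

lemma sum_tagged_division_grouped_le:
  fixes f :: "real \<Rightarrow> 'a::metric_space" and D :: "(real \<times> real set) set"
    and j :: "real \<Rightarrow> real \<times> real"
  assumes D: "D tagged_division_of {p..q}" and "G \<subseteq> D" and "countable \<J>" and "0 \<le> e"
    and G: "\<And>x K. (x, K) \<in> G \<Longrightarrow> j x \<in> \<J> \<and> K \<subseteq> {fst (j x)..snd (j x)} \<inter> U (j x)"
    and U: "\<And>i S. i \<in> \<J> \<Longrightarrow> nonoverlapping_intervals (fst i) (snd i) S \<Longrightarrow> \<forall>(u, v)\<in>S. {u..v} \<subseteq> U i \<Longrightarrow>
      (\<Sum>(u, v)\<in>S. dist (f v) (f u)) < e * (1/2) ^ to_nat_on \<J> i"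
  shows "(\<Sum>(x, K)\<in>G. dist (f (Sup K)) (f (Inf K))) \<le> 2 * e"
proof -
  have "finite G"
    using \<open>G \<subseteq> D\<close> tagged_division_ofD(1)[OF D] by (rule finite_subset)
  have "(\<Sum>(x, K)\<in>G. dist (f (Sup K)) (f (Inf K)))
      = (\<Sum>i\<in>(j \<circ> fst) ` G. \<Sum>(x, K)\<in>{z\<in>G. (j \<circ> fst) z = i}. dist (f (Sup K)) (f (Inf K)))"
    by (rule sum.image_gen[OF \<open>finite G\<close>])
  also have "\<dots> \<le> (\<Sum>i\<in>(j \<circ> fst) ` G. e * (1/2) ^ to_nat_on \<J> i)"
  proof (rule sum_mono)
    fix i assume "i \<in> (j \<circ> fst) ` G"
    then have "i \<in> \<J>"
      using G by auto
    define G_i where "G_i = {z\<in>G. (j \<circ> fst) z = i}"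
    have sub: "G_i \<subseteq> D"
      using \<open>G \<subseteq> D\<close> by (auto simp: G_i_def)
    have G_i: "\<Union>(snd ` G_i) \<subseteq> {fst i..snd i}"
      using G by (fastforce simp: G_i_def)
    obtain S where S: "nonoverlapping_intervals (fst i) (snd i) S"
      and S_G_i: "\<And>u v. (u, v) \<in> S \<Longrightarrow> \<exists>x. (x, {u..v}) \<in> G_i"
      and "(\<Sum>(x, K)\<in>G_i. dist (f (Sup K)) (f (Inf K))) = (\<Sum>(u, v)\<in>S. dist (f v) (f u))"
      using tagged_subdivision_intervals[OF D sub G_i, where g = "\<lambda>u v. dist (f v) (f u)"] by auto
    moreover have "(\<Sum>(u, v)\<in>S. dist (f v) (f u)) < e * (1/2) ^ to_nat_on \<J> i"
      using U[OF \<open>i \<in> \<J>\<close> S] S_G_i G by (fastforce simp: G_i_def)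
    ultimately show "(\<Sum>(x, K)\<in>G_i. dist (f (Sup K)) (f (Inf K))) \<le> e * (1/2) ^ to_nat_on \<J> i"
      by simp
  qed
  also have "\<dots> = e * (\<Sum>i\<in>(j \<circ> fst) ` G. (1/2) ^ to_nat_on \<J> i)"
    by (simp add: sum_distrib_left)
  also have "\<dots> \<le> e * 2"
  proof -
    have "inj_on (to_nat_on \<J>) ((j \<circ> fst) ` G)"
      using inj_on_to_nat_on[OF \<open>countable \<J>\<close>] by (rule inj_on_subset) (use G in auto)
    then show ?thesis
      using \<open>finite G\<close> \<open>0 \<le> e\<close> by (intro mult_left_mono sum_power_half_inj_le) auto
  qed
  finally show ?thesis
    by simp
qed

lemma null_set_abs_cont_covers:
  fixes f :: "real \<Rightarrow> 'a::metric_space"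
  assumes "closed E" and ac: "\<And>c d. c \<le> d \<Longrightarrow> {c..d} \<subseteq> {a..b} - E \<Longrightarrow> abs_cont_on f c d"
    and N: "N \<in> null_sets lebesgue" and "e > 0"
  obtains \<J> :: "(real \<times> real) set" and U :: "real \<times> real \<Rightarrow> real set" and j r where "countable \<J>"
    "\<And>i S. i \<in> \<J> \<Longrightarrow> nonoverlapping_intervals (fst i) (snd i) S \<Longrightarrow> \<forall>(u, v)\<in>S. {u..v} \<subseteq> U i \<Longrightarrow>
       (\<Sum>(u, v)\<in>S. dist (f v) (f u)) < e * (1/2) ^ to_nat_on \<J> i"
    "\<And>x. x \<in> {a..b} \<inter> N - E \<Longrightarrow>
       j x \<in> \<J> \<and> r x > 0 \<and> ball x (r x) \<inter> {a..b} \<subseteq> {fst (j x)..snd (j x)} \<inter> U (j x)"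
proof -
  obtain \<J> :: "(real \<times> real) set" where "countable \<J>"
    and \<J>: "\<And>c d. (c, d) \<in> \<J> \<Longrightarrow> c \<le> d \<and> {c..d} \<subseteq> {a..b} - E"
    and cover: "\<And>x. x \<in> {a..b} - E \<Longrightarrow> \<exists>(c, d)\<in>\<J>. \<exists>r>0. ball x r \<inter> {a..b} \<subseteq> {c..d}"
    by (rule countable_Icc_cover_complement[OF \<open>closed E\<close>]) (rule that)
  have "\<exists>U. open U \<and> N \<subseteq> U \<and> (\<forall>S. nonoverlapping_intervals (fst i) (snd i) S \<longrightarrow>
      (\<forall>(u, v)\<in>S. {u..v} \<subseteq> U) \<longrightarrow> (\<Sum>(u, v)\<in>S. dist (f v) (f u)) < e * (1/2) ^ to_nat_on \<J> i)"
    if "i \<in> \<J>" for i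
  proof -
    have "abs_cont_on f (fst i) (snd i)"
      using \<J>[of "fst i" "snd i"] ac that by simp
    moreover have "e * (1/2) ^ to_nat_on \<J> i > 0"
      using \<open>e > 0\<close> by simp
    ultimately show ?thesis
      using abs_cont_on_open_cover[OF _ N] by metis
  qed
  then obtain U where U: "\<And>i. i \<in> \<J> \<Longrightarrow> open (U i) \<and> N \<subseteq> U i"
    and U_ac: "\<And>i S. i \<in> \<J> \<Longrightarrow> nonoverlapping_intervals (fst i) (snd i) S \<Longrightarrow>
      \<forall>(u, v)\<in>S. {u..v} \<subseteq> U i \<Longrightarrow> (\<Sum>(u, v)\<in>S. dist (f v) (f u)) < e * (1/2) ^ to_nat_on \<J> i"
    by metis
  have "\<exists>i r. i \<in> \<J> \<and> r > 0 \<and> ball x r \<inter> {a..b} \<subseteq> {fst i..snd i} \<inter> U i"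
    if x: "x \<in> {a..b} \<inter> N - E" for x
  proof -
    obtain c d r1 where "(c, d) \<in> \<J>" "r1 > 0" "ball x r1 \<inter> {a..b} \<subseteq> {c..d}"
      using cover x by blast
    moreover obtain r2 where "r2 > 0" "ball x r2 \<subseteq> U (c, d)"
      using U[OF \<open>(c, d) \<in> \<J>\<close>] x open_contains_ball by blast
    ultimately show ?thesis
      by (intro exI[of _ "(c, d)"] exI[of _ "min r1 r2"]) auto
  qed
  then obtain j r where "\<And>x. x \<in> {a..b} \<inter> N - E \<Longrightarrow>
      j x \<in> \<J> \<and> r x > 0 \<and> ball x (r x) \<inter> {a..b} \<subseteq> {fst (j x)..snd (j x)} \<inter> U (j x)"
    by metis
  with \<open>countable \<J>\<close> U_ac show ?thesis
    by (rule that)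
qed

lemma gauge_null_tags:
  fixes f :: "real \<Rightarrow> 'a::metric_space"
  assumes "closed E" and ac: "\<And>c d. c \<le> d \<Longrightarrow> {c..d} \<subseteq> {a..b} - E \<Longrightarrow> abs_cont_on f c d"
    and N: "N \<in> null_sets lebesgue" and "e > 0"
  obtains \<gamma> where "gauge \<gamma>"
    "\<And>D p q. D tagged_division_of {p..q} \<Longrightarrow> {p..q} \<subseteq> {a..b} \<Longrightarrow> \<gamma> fine D \<Longrightarrow>
       (\<Sum>(x, K)\<in>{(x, K)\<in>D. x \<in> N - E}. dist (f (Sup K)) (f (Inf K))) \<le> 2 * e"
proof -
  obtain \<J> :: "(real \<times> real) set" and U :: "real \<times> real \<Rightarrow> real set" and j r where "countable \<J>"
    and U: "\<And>i S. i \<in> \<J> \<Longrightarrow> nonoverlapping_intervals (fst i) (snd i) S \<Longrightarrow> \<forall>(u, v)\<in>S. {u..v} \<subseteq> U i \<Longrightarrow>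
       (\<Sum>(u, v)\<in>S. dist (f v) (f u)) < e * (1/2) ^ to_nat_on \<J> i"
    and jr: "\<And>x. x \<in> {a..b} \<inter> N - E \<Longrightarrow>
       j x \<in> \<J> \<and> r x > 0 \<and> ball x (r x) \<inter> {a..b} \<subseteq> {fst (j x)..snd (j x)} \<inter> U (j x)"
    by (rule null_set_abs_cont_covers[OF \<open>closed E\<close> ac N \<open>e > 0\<close>]) (assumption+, rule that)
  define R where "R x = (if x \<in> {a..b} \<inter> N - E then r x else 1)" for x
  show ?thesis
  proof (rule that)
    show "gauge (\<lambda>x. ball x (R x))"
      using jr by (intro gauge_ball_dependent) (simp add: R_def)
    fix D p q assume D: "D tagged_division_of {p..q}" and "{p..q} \<subseteq> {a..b}"
      and fine: "(\<lambda>x. ball x (R x)) fine D"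
    have "j x \<in> \<J> \<and> K \<subseteq> {fst (j x)..snd (j x)} \<inter> U (j x)" if "(x, K) \<in> {(x, K)\<in>D. x \<in> N - E}" for x K
    proof -
      have xK: "(x, K) \<in> D" and x: "x \<in> {a..b} \<inter> N - E"
        using that tag_in_interval[OF D, of x K] \<open>{p..q} \<subseteq> {a..b}\<close> by auto
      have "K \<subseteq> ball x (r x) \<inter> {a..b}"
        using tagged_division_ofD(3)[OF D xK] fineD[OF fine xK] \<open>{p..q} \<subseteq> {a..b}\<close> x by (auto simp: R_def)
      with jr[OF x] show ?thesis
        by blast
    qed
    with \<open>countable \<J>\<close> \<open>e > 0\<close> show "(\<Sum>(x, K)\<in>{(x, K)\<in>D. x \<in> N - E}. dist (f (Sup K)) (f (Inf K))) \<le> 2 * e"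
      by (intro sum_tagged_division_grouped_le[OF D _ _ _ _ U]) auto
  qed
qed

lemma dist_le_sum_tagged_division:
  fixes f :: "real \<Rightarrow> 'a::metric_space" and D :: "(real \<times> real set) set"
  assumes "p \<le> q" "D tagged_division_of {p..q}"
  shows "dist (f q) (f p) \<le> (\<Sum>(x, K)\<in>D. dist (f (Sup K)) (f (Inf K)))"
proof -
  have "dist (f q) (f p) = (\<Sum>(x, K)\<in>D. dist (f (Sup K)) (f p) - dist (f (Inf K)) (f p))"
    using additive_tagged_division_1[OF assms, of "\<lambda>t. dist (f t) (f p)"] by simp
  also have "\<dots> \<le> (\<Sum>(x, K)\<in>D. dist (f (Sup K)) (f (Inf K)))"
  proof (rule sum_mono, clarify)
    fix x K
    show "dist (f (Sup K)) (f p) - dist (f (Inf K)) (f p) \<le> dist (f (Sup K)) (f (Inf K))"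
      using dist_triangle[of "f (Sup K)" "f p" "f (Inf K)"] by simp
  qed
  finally show ?thesis .
qed

lemma sum_le_sum_filter_cover3:
  fixes g :: "'a \<Rightarrow> real"
  assumes "finite A" "\<And>z. z \<in> A \<Longrightarrow> 0 \<le> g z" "\<And>z. z \<in> A \<Longrightarrow> P z \<or> Q z \<or> R z"
  shows "sum g A \<le> sum g {z\<in>A. P z} + sum g {z\<in>A. Q z} + sum g {z\<in>A. R z}"
proof -
  have "sum g A \<le> (\<Sum>z\<in>A. (if P z then g z else 0) + (if Q z then g z else 0) + (if R z then g z else 0))"
    using assms(2,3) by (intro sum_mono) fastforce
  also have "\<dots> = sum g {z\<in>A. P z} + sum g {z\<in>A. Q z} + sum g {z\<in>A. R z}"
    using assms(1) by (simp add: sum.distrib sum.inter_filter)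
  finally show ?thesis .
qed

lemma gauge_sum_dist_le_riemann_sum:
  fixes f :: "real \<Rightarrow> 'a::metric_space"
  assumes ab: "a < b" and cont: "continuous_on {a..b} f" and "closed E" "countable E"
    and ac: "\<And>c d. c \<le> d \<Longrightarrow> {c..d} \<subseteq> {a..b} - E \<Longrightarrow> abs_cont_on f c d"
    and ae: "AE x in lebesgue. x \<in> {a..b} \<longrightarrow> md_exists f a b x"
    and pq: "a \<le> p" "p \<le> q" "q \<le> b" and "e > 0"
  obtains \<gamma> where "gauge \<gamma>"
    "\<And>D. D tagged_division_of {p..q} \<Longrightarrow> \<gamma> fine D \<Longrightarrow>
       (\<Sum>(x, K)\<in>D. dist (f (Sup K)) (f (Inf K))) \<le> (\<Sum>(x, K)\<in>D. measure lborel K * md f a b x) + e * (6 + (q - p))"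
proof -
  obtain N where N: "N \<in> null_sets lebesgue" and md_N: "\<And>x. x \<in> {a..b} \<Longrightarrow> \<not> md_exists f a b x \<Longrightarrow> x \<in> N"
    using ae unfolding eventually_ae_filter by auto
  obtain \<gamma>1 where "gauge \<gamma>1" and \<gamma>1: "\<And>D p q. D tagged_division_of {p..q} \<Longrightarrow> {p..q} \<subseteq> {a..b} \<Longrightarrow>
      \<gamma>1 fine D \<Longrightarrow> (\<Sum>(x, K)\<in>{(x, K)\<in>D. x \<in> E}. dist (f (Sup K)) (f (Inf K))) \<le> 4 * e"
    by (rule gauge_countable_tags[OF cont \<open>countable E\<close> \<open>e > 0\<close>]) (rule that)
  obtain \<gamma>2 where "gauge \<gamma>2" and \<gamma>2: "\<And>D p q. p \<le> q \<Longrightarrow> D tagged_division_of {p..q} \<Longrightarrow>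
      {p..q} \<subseteq> {a..b} \<Longrightarrow> \<gamma>2 fine D \<Longrightarrow>
      (\<Sum>(x, K)\<in>{(x, K)\<in>D. md_exists f a b x}. dist (f (Sup K)) (f (Inf K)))
        \<le> (\<Sum>(x, K)\<in>D. measure lborel K * md f a b x) + e * (q - p)"
    by (rule gauge_md_tags[OF ab \<open>e > 0\<close>]) (rule that)
  obtain \<gamma>3 where "gauge \<gamma>3" and \<gamma>3: "\<And>D p q. D tagged_division_of {p..q} \<Longrightarrow> {p..q} \<subseteq> {a..b} \<Longrightarrow>
      \<gamma>3 fine D \<Longrightarrow> (\<Sum>(x, K)\<in>{(x, K)\<in>D. x \<in> N - E}. dist (f (Sup K)) (f (Inf K))) \<le> 2 * e"
    by (rule gauge_null_tags[OF \<open>closed E\<close> ac N \<open>e > 0\<close>]) (assumption+, rule that)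
  show ?thesis
  proof (rule that)
    show "gauge (\<lambda>x. \<gamma>1 x \<inter> \<gamma>2 x \<inter> \<gamma>3 x)"
      by (intro gauge_Int) fact+
    fix D assume D: "D tagged_division_of {p..q}" and "(\<lambda>x. \<gamma>1 x \<inter> \<gamma>2 x \<inter> \<gamma>3 x) fine D"
    then have fine: "\<gamma>1 fine D" "\<gamma>2 fine D" "\<gamma>3 fine D"
      by (auto simp: fine_Int)
    have sub: "{p..q} \<subseteq> {a..b}"
      using pq by auto
    have "fst z \<in> E \<or> md_exists f a b (fst z) \<or> fst z \<in> N - E" if "z \<in> D" for z
      using md_N tag_in_interval[OF D, of "fst z" "snd z"] that sub by auto
    from sum_le_sum_filter_cover3[where g = "\<lambda>(x, K). dist (f (Sup K)) (f (Inf K))"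
        and P = "\<lambda>z. fst z \<in> E" and Q = "\<lambda>z. md_exists f a b (fst z)" and R = "\<lambda>z. fst z \<in> N - E",
        OF tagged_division_ofD(1)[OF D] _ this]
    have "(\<Sum>(x, K)\<in>D. dist (f (Sup K)) (f (Inf K)))
        \<le> (\<Sum>(x, K)\<in>{(x, K)\<in>D. x \<in> E}. dist (f (Sup K)) (f (Inf K)))
          + (\<Sum>(x, K)\<in>{(x, K)\<in>D. md_exists f a b x}. dist (f (Sup K)) (f (Inf K)))
          + (\<Sum>(x, K)\<in>{(x, K)\<in>D. x \<in> N - E}. dist (f (Sup K)) (f (Inf K)))"
      by (simp add: split_beta')
    then show "(\<Sum>(x, K)\<in>D. dist (f (Sup K)) (f (Inf K)))
        \<le> (\<Sum>(x, K)\<in>D. measure lborel K * md f a b x) + e * (6 + (q - p))"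
      using \<gamma>1[OF D sub fine(1)] \<gamma>2[OF pq(2) D sub fine(2)] \<gamma>3[OF D sub fine(3)]
      by (simp add: algebra_simps)
  qed
qed

lemma dist_le_integral_md:
  fixes f :: "real \<Rightarrow> 'a::metric_space"
  assumes ab: "a < b" and cont: "continuous_on {a..b} f" and "closed E" "countable E"
    and ac: "\<And>c d. c \<le> d \<Longrightarrow> {c..d} \<subseteq> {a..b} - E \<Longrightarrow> abs_cont_on f c d"
    and ae: "AE x in lebesgue. x \<in> {a..b} \<longrightarrow> md_exists f a b x"
    and int: "md f a b integrable_on {p..q}" and pq: "a \<le> p" "p \<le> q" "q \<le> b"
  shows "dist (f q) (f p) \<le> integral {p..q} (md f a b)"
proof -
  have approx: "dist (f q) (f p) \<le> integral {p..q} (md f a b) + e * (7 + (q - p))" if "e > 0" for e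
  proof -
    obtain \<gamma>0 where "gauge \<gamma>0" and \<gamma>0: "\<forall>D. D tagged_division_of {p..q} \<and> \<gamma>0 fine D \<longrightarrow>
        norm ((\<Sum>(x, K)\<in>D. measure lborel K *\<^sub>R md f a b x) - integral {p..q} (md f a b)) < e"
      using has_integral_real[THEN iffD1, OF integrable_integral[OF int], rule_format, OF \<open>e > 0\<close>]
      by (elim exE conjE) auto
    obtain \<gamma> where "gauge \<gamma>" and \<gamma>: "\<And>D. D tagged_division_of {p..q} \<Longrightarrow> \<gamma> fine D \<Longrightarrow>
        (\<Sum>(x, K)\<in>D. dist (f (Sup K)) (f (Inf K)))
          \<le> (\<Sum>(x, K)\<in>D. measure lborel K * md f a b x) + e * (6 + (q - p))"
      by (rule gauge_sum_dist_le_riemann_sum[OF ab cont \<open>closed E\<close> \<open>countable E\<close> ac ae pq \<open>e > 0\<close>])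
        (assumption+, rule that)
    have "gauge (\<lambda>x. \<gamma>0 x \<inter> \<gamma> x)"
      by (intro gauge_Int) fact+
    then obtain D where D: "D tagged_division_of {p..q}" and "(\<lambda>x. \<gamma>0 x \<inter> \<gamma> x) fine D"
      by (rule fine_division_exists_real)
    then have fine: "\<gamma>0 fine D" "\<gamma> fine D"
      by (auto simp: fine_Int)
    have "dist (f q) (f p) \<le> (\<Sum>(x, K)\<in>D. dist (f (Sup K)) (f (Inf K)))"
      using dist_le_sum_tagged_division[OF pq(2) D] .
    also have "\<dots> \<le> (\<Sum>(x, K)\<in>D. measure lborel K * md f a b x) + e * (6 + (q - p))"
      using \<gamma>[OF D fine(2)] .
    also have "\<dots> \<le> integral {p..q} (md f a b) + e * (7 + (q - p))"
      using \<gamma>0[rule_format, OF conjI[OF D fine(1)]] by (simp add: abs_less_iff algebra_simps)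
    finally show ?thesis .
  qed
  show ?thesis
  proof (rule field_le_epsilon)
    fix e :: real assume "e > 0"
    have "7 + (q - p) > 0"
      using pq by linarith
    with \<open>e > 0\<close> show "dist (f q) (f p) \<le> integral {p..q} (md f a b) + e"
      using approx[of "e / (7 + (q - p))"] by simp
  qed
qed

theorem theorem3p9:
  fixes f :: "real \<Rightarrow> 'a::metric_space" and a b :: real and E :: "real set"
  assumes "continuous_on {a..b} f"
    and "closed E" and "countable E" and "E \<subseteq> {a..b}"
    and "\<And>c d. c \<le> d \<Longrightarrow> {c..d} \<subseteq> {a..b} - E \<Longrightarrow> abs_cont_on f c d"
    and "AE x in lebesgue. x \<in> {a..b} \<longrightarrow> md_exists f a b x"
    and "(\<integral>\<^sup>+ x \<in> {a..b}. ennreal (md f a b x) \<partial>lebesgue) < \<infinity>"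
  shows "abs_cont_on f a b"
proof (cases "a < b")
  case True
  have "set_integrable lebesgue {a..b} (md f a b)"
    by (rule md_set_integrable[OF True assms(1,6,7)])
  then have int: "md f a b integrable_on {a..b}"
    by (rule set_lebesgue_integral_eq_integral(1))
  show ?thesis
  proof (rule abs_cont_on_if_dist_le_integral[OF int])
    show "0 \<le> md f a b x" if "x \<in> {a..b}" for x
      using md_nonneg[OF True that] .
    show "dist (f v) (f u) \<le> integral {u..v} (md f a b)" if "a \<le> u" "u \<le> v" "v \<le> b" for u v
      using that integrable_on_subinterval[OF int, of u v]
      by (intro dist_le_integral_md[OF True assms(1-3,5,6)]) auto
  qed
next
  case False
  show ?thesis
  proof (rule abs_cont_on_if_dist_le_integral[where h = "\<lambda>_. 0"])
    show "dist (f v) (f u) \<le> integral {u..v} (\<lambda>_. 0)" if "a \<le> u" "u \<le> v" "v \<le> b" for u v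
    proof -
      have "u = v"
        using that False by linarith
      then show ?thesis
        by simp
    qed
  qed auto
qed

end
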